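(* Let $W=q^{\Delta^2/2}\Gamma'_{-}(Qq^{-\rho})^{-1}\Gamma_{-}(q^{-\rho})^{-1}q^{-\Delta^2/2}$ and $L=W\Lambda W^{-1}$. Then $$L=(\Lambda-q^\Delta)(1+Qq^{\Delta-1}\Lambda^{-1})^{-1}=(1+Qq^{\Delta}\Lambda^{-1})^{-1}(\Lambda-q^\Delta),$$ where $(1+Qq^{\Delta-1}\Lambda^{-1})^{-1}=\sum_{n\ge0}(-Qq^{\Delta-1}\Lambda^{-1})^n$ and similarly for $(1+Qq^\Delta\Lambda^{-1})^{-1}$.
   Context: Let $0<|q|<1$, $0<|Q|<1$, with a fixed $q^{1/2}$. Work with $\mathbb{Z}\times\mathbb{Z}$ matrices; $\Delta=\sum_{i\in\mathbb{Z}}iE_{ii}$, $\Lambda=\sum_{i\in\mathbb{Z}}E_{i,i+1}$, $f(\Delta)=\sum_if(i)E_{ii}$ (e.g. $q^{\Delta}$, $q^{\Delta-1}$, $q^{\Delta^2/2}=\sum_iq^{i^2/2}E_{ii}$). For a parameter $a$, $\Gamma_{-}(aq^{-\rho})=\prod_{i\ge1}(1-aq^{i-1/2}\Lambda^{-1})^{-1}$ with $(1-x\Lambda^{-1})^{-1}=\sum_{n\ge0}x^n\Lambda^{-n}$, and $\Gamma'_{-}(aq^{-\rho})=\prod_{i\ge1}(1+aq^{i-1/2}\Lambda^{-1})$; $\Gamma_-(q^{-\rho})$ means $a=1$. Inverses are taken within lower triangular matrices. *)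

theory Defs
  imports "HOL-Analysis.Analysis"
begin

type_synonym cmat = "int \<Rightarrow> int \<Rightarrow> complex"

definition mmul :: "cmat \<Rightarrow> cmat \<Rightarrow> cmat" where
  "mmul A B = (\<lambda>i j. infsum (\<lambda>k. A i k * B k j) UNIV)"

definition mid :: cmat where
  "mid = (\<lambda>i j. if i = j then 1 else 0)"

definition mscale :: "complex \<Rightarrow> cmat \<Rightarrow> cmat" where
  "mscale c A = (\<lambda>i j. c * A i j)"

definition madd :: "cmat \<Rightarrow> cmat \<Rightarrow> cmat" where
  "madd A B = (\<lambda>i j. A i j + B i j)"

definition msub :: "cmat \<Rightarrow> cmat \<Rightarrow> cmat" where
  "msub A B = (\<lambda>i j. A i j - B i j)"

definition mdiag :: "(int \<Rightarrow> complex) \<Rightarrow> cmat" where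
  "mdiag f = (\<lambda>i j. if i = j then f i else 0)"

definition Lam :: cmat where
  "Lam = (\<lambda>i j. if j = i + 1 then 1 else 0)"

definition Laminv :: cmat where
  "Laminv = (\<lambda>i j. if i = j + 1 then 1 else 0)"

fun mpow :: "cmat \<Rightarrow> nat \<Rightarrow> cmat" where
  "mpow A 0 = mid"
| "mpow A (Suc n) = mmul (mpow A n) A"

definition mseries :: "(nat \<Rightarrow> cmat) \<Rightarrow> cmat" where
  "mseries F = (\<lambda>i j. \<Sum>n. F n i j)"

fun mprod :: "(nat \<Rightarrow> cmat) \<Rightarrow> nat \<Rightarrow> cmat" where
  "mprod F 0 = mid"
| "mprod F (Suc N) = mmul (mprod F N) (F (Suc N))"

definition lower_tri :: "cmat \<Rightarrow> bool" where
  "lower_tri A \<longleftrightarrow> (\<forall>i j. i < j \<longrightarrow> A i j = 0)"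

definition linv :: "cmat \<Rightarrow> cmat" where
  "linv A = (THE B. lower_tri B \<and> mmul A B = mid \<and> mmul B A = mid)"

text \<open>(1 - x Lambda^{-1})^{-1} = sum_{n>=0} x^n Lambda^{-n}\<close>
definition geom_inv :: "complex \<Rightarrow> cmat" where
  "geom_inv x = mseries (\<lambda>n. mscale (x ^ n) (mpow Laminv n))"

text \<open>s is the fixed square root q^{1/2}, so a q^{k-1/2} = a s^(2k-1).
  Infinite products are entrywise limits of the finite partial products.\<close>
definition Gamma_minus :: "complex \<Rightarrow> complex \<Rightarrow> cmat" where
  "Gamma_minus s a = (\<lambda>i j. lim (\<lambda>N. mprod (\<lambda>k. geom_inv (a * s ^ (2 * k - 1))) N i j))"

definition Gamma_minus' :: "complex \<Rightarrow> complex \<Rightarrow> cmat" where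
  "Gamma_minus' s a = (\<lambda>i j. lim (\<lambda>N. mprod (\<lambda>k. madd mid (mscale (a * s ^ (2 * k - 1)) Laminv)) N i j))"

text \<open>q^{Delta^2/2} = sum_i q^{i^2/2} E_ii = sum_i s^{i^2} E_ii\<close>
definition qhalfsq :: "complex \<Rightarrow> cmat" where
  "qhalfsq s = mdiag (\<lambda>i. s ^ nat (i * i))"

definition qhalfsq_inv :: "complex \<Rightarrow> cmat" where
  "qhalfsq_inv s = mdiag (\<lambda>i. inverse (s ^ nat (i * i)))"

definition Wmat :: "complex \<Rightarrow> complex \<Rightarrow> cmat" where
  "Wmat s Q = mmul (mmul (mmul (qhalfsq s) (linv (Gamma_minus' s Q)))
                 (linv (Gamma_minus s 1))) (qhalfsq_inv s)"

definition Lmat :: "complex \<Rightarrow> complex \<Rightarrow> cmat" where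
  "Lmat s Q = mmul (mmul (Wmat s Q) Lam) (linv (Wmat s Q))"

end

theory Submission
  imports Defs "HOL-Computational_Algebra.Formal_Power_Series"
begin

unbundle no vec_syntax
unbundle fps_syntax

text \<open>
  Every matrix involved is, up to conjugation by a diagonal matrix, a lower triangular Toeplitz
  matrix f(\<Lambda>^-1) with f a formal power series, and f \<mapsto> f(\<Lambda>^-1) is multiplicative.
  The partial products of \<Gamma>_-(q^-\<rho>) and \<Gamma>'_-(Q q^-\<rho>) satisfy first-order q-difference
  equations which determine their coefficients recursively; passing to the limit gives
  W = q^(\<Delta>^2/2) f(\<Lambda>^-1)^-1 q^(-\<Delta>^2/2), where, with s = q^(1/2), the series f satisfies
  (1 - s X) f(X) = (1 + Q s X) f(q X). Conjugation by the Gaussian q^(\<Delta>^2/2) turns this equation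
  into \<Lambda> W^-1 (1 + Q q^(\<Delta>-1) \<Lambda>^-1) = W^-1 (\<Lambda> - q^\<Delta>), that is L (1 + Q q^(\<Delta>-1) \<Lambda>^-1) = \<Lambda> - q^\<Delta>.
  Inverting the bidiagonal factor by its Neumann series gives the first formula, and
  (1 + Q q^\<Delta> \<Lambda>^-1)(\<Lambda> - q^\<Delta>) = (\<Lambda> - q^\<Delta>)(1 + Q q^(\<Delta>-1) \<Lambda>^-1) gives the second.
  Only banded matrices are ever multiplied, so every entry of a product is a finite sum and
  multiplication is associative.
\<close>

section \<open>Banded matrices\<close>

definition banded :: "nat \<Rightarrow> cmat \<Rightarrow> bool" where
  "banded d A \<longleftrightarrow> (\<forall>i j. i + int d < j \<longrightarrow> A i j = 0)"

lemma lower_tri_iff_banded: "lower_tri A \<longleftrightarrow> banded 0 A"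
  unfolding lower_tri_def banded_def by auto

lemma banded_mono: "banded d A \<Longrightarrow> d \<le> e \<Longrightarrow> banded e A"
  unfolding banded_def by force

lemma banded_msub: "banded d A \<Longrightarrow> banded d B \<Longrightarrow> banded d (msub A B)"
  unfolding banded_def msub_def by auto

lemma banded_mid: "banded 0 mid"
  unfolding banded_def mid_def by auto

lemma banded_mdiag: "banded 0 (mdiag f)"
  unfolding banded_def mdiag_def by auto

lemma banded_Lam: "banded 1 Lam"
  unfolding banded_def Lam_def by auto

lemma mmul_eq_single_term:
  assumes "\<And>l. l \<noteq> k \<Longrightarrow> A i l * B l j = 0"
  shows "mmul A B i j = A i k * B k j"
proof -
  have "mmul A B i j = infsum (\<lambda>l. A i l * B l j) {k}"
    unfolding mmul_def by (rule infsum_cong_neutral) (auto simp: assms)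
  then show ?thesis by simp
qed

lemma mmul_banded_eq_sum:
  assumes "banded d A" "banded e B" "a \<le> j - int e" "i + int d \<le> b"
  shows "mmul A B i j = (\<Sum>k=a..b. A i k * B k j)"
proof -
  have "A i k * B k j = 0" if "k \<notin> {a..b}" for k
    using that assms unfolding banded_def by (cases "k < a") auto
  then have "mmul A B i j = infsum (\<lambda>k. A i k * B k j) {a..b}"
    unfolding mmul_def by (intro infsum_cong_neutral) auto
  then show ?thesis by simp
qed

lemma banded_mmul:
  assumes "banded d A" "banded e B"
  shows "banded (d + e) (mmul A B)"
  unfolding banded_def
proof (intro allI impI)
  fix i j assume "i + int (d + e) < j"
  then show "mmul A B i j = 0"
    by (simp add: mmul_banded_eq_sum[OF assms, of "j - int e" j i "i + int d"])
qed

lemma mmul_assoc_banded: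
  assumes A: "banded d A" and B: "banded e B" and C: "banded f C"
  shows "mmul (mmul A B) C = mmul A (mmul B C)"
proof (intro ext)
  fix i j
  define K where "K = {j - int f..i + int d + int e}"
  define L where "L = {j - int e - int f..i + int d}"
  have "mmul (mmul A B) C i j = (\<Sum>k\<in>K. mmul A B i k * C k j)"
    unfolding K_def by (rule mmul_banded_eq_sum[OF banded_mmul[OF A B] C]) auto
  also have "\<dots> = (\<Sum>k\<in>K. \<Sum>l\<in>L. A i l * B l k * C k j)"
    unfolding K_def L_def
    by (intro sum.cong refl)
       (auto simp: mmul_banded_eq_sum[OF A B, of "j - int e - int f" _ i "i + int d"] sum_distrib_right)
  also have "\<dots> = (\<Sum>l\<in>L. A i l * (\<Sum>k\<in>K. B l k * C k j))"
    by (subst sum.swap) (simp add: sum_distrib_left mult.assoc)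
  also have "\<dots> = (\<Sum>l\<in>L. A i l * mmul B C l j)"
    unfolding K_def L_def
    by (intro sum.cong refl)
       (auto simp: mmul_banded_eq_sum[OF B C, of "j - int f" j _ "i + int d + int e"])
  also have "\<dots> = mmul A (mmul B C) i j"
    unfolding L_def by (rule mmul_banded_eq_sum[OF A banded_mmul[OF B C], symmetric]) auto
  finally show "mmul (mmul A B) C i j = mmul A (mmul B C) i j" .
qed

lemma mmul_msub_right:
  assumes "banded d X" "banded e A" "banded e B"
  shows "mmul X (msub A B) = msub (mmul X A) (mmul X B)"
proof (intro ext)
  fix i j
  let ?S = "\<lambda>Y. \<Sum>k=j - int e..i + int d. X i k * Y k j"
  have "mmul X (msub A B) i j = ?S (msub A B)"
    by (rule mmul_banded_eq_sum[OF assms(1) banded_msub[OF assms(2,3)]]) auto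
  also have "\<dots> = ?S A - ?S B"
    by (simp add: msub_def right_diff_distrib sum_subtractf)
  finally show "mmul X (msub A B) i j = msub (mmul X A) (mmul X B) i j"
    by (simp add: msub_def mmul_banded_eq_sum[OF assms(1) assms(2), of "j - int e" j i "i + int d"]
                  mmul_banded_eq_sum[OF assms(1) assms(3), of "j - int e" j i "i + int d"])
qed

lemma mmul_msub_left:
  assumes "banded d X" "banded e A" "banded e B"
  shows "mmul (msub A B) X = msub (mmul A X) (mmul B X)"
proof (intro ext)
  fix i j
  let ?S = "\<lambda>Y. \<Sum>k=j - int d..i + int e. Y i k * X k j"
  have "mmul (msub A B) X i j = ?S (msub A B)"
    by (rule mmul_banded_eq_sum[OF banded_msub[OF assms(2,3)] assms(1)]) auto
  also have "\<dots> = ?S A - ?S B"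
    by (simp add: msub_def left_diff_distrib sum_subtractf)
  finally show "mmul (msub A B) X i j = msub (mmul A X) (mmul B X) i j"
    by (simp add: msub_def mmul_banded_eq_sum[OF assms(2) assms(1), of "j - int d" j i "i + int e"]
                  mmul_banded_eq_sum[OF assms(3) assms(1), of "j - int d" j i "i + int e"])
qed

lemma mmul_mid_left [simp]: "mmul mid X = X"
  by (intro ext, subst mmul_eq_single_term[where k = "_"]) (auto simp: mid_def)

lemma mmul_mid_right [simp]: "mmul X mid = X"
  by (intro ext, subst mmul_eq_single_term[where k = "_"]) (auto simp: mid_def)

lemma mmul_mdiag_left: "mmul (mdiag f) X = (\<lambda>i j. f i * X i j)"
  by (intro ext, subst mmul_eq_single_term[where k = "_"]) (auto simp: mdiag_def)

lemma mmul_mdiag_right: "mmul X (mdiag f) = (\<lambda>i j. X i j * f j)"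
  by (intro ext, subst mmul_eq_single_term[where k = "_"]) (auto simp: mdiag_def)

lemma mmul_Lam_left: "mmul Lam X = (\<lambda>i j. X (i + 1) j)"
  by (intro ext, subst mmul_eq_single_term[where k = "_ + 1"]) (auto simp: Lam_def)

lemma mmul_Lam_right: "mmul X Lam = (\<lambda>i j. X i (j - 1))"
  by (intro ext, subst mmul_eq_single_term[where k = "_ - 1"]) (auto simp: Lam_def)

section \<open>Subdiagonal matrices and their Neumann series\<close>

definition subdiag :: "(int \<Rightarrow> complex) \<Rightarrow> cmat" where
  "subdiag a = (\<lambda>i j. if i = j + 1 then a i else 0)"

lemma banded_subdiag: "banded 0 (subdiag a)"
  unfolding banded_def subdiag_def by auto

lemma mmul_subdiag_left: "mmul (subdiag a) X = (\<lambda>i j. a i * X (i - 1) j)"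
  by (intro ext, subst mmul_eq_single_term[where k = "_ - 1"]) (auto simp: subdiag_def)

lemma mmul_subdiag_right: "mmul X (subdiag a) = (\<lambda>i j. X i (j + 1) * a (j + 1))"
  by (intro ext, subst mmul_eq_single_term[where k = "_ + 1"]) (auto simp: subdiag_def)

lemma Laminv_eq_subdiag: "Laminv = subdiag (\<lambda>_. 1)"
  unfolding Laminv_def subdiag_def by simp

lemma mscale_mdiag_Laminv: "mscale c (mmul (mdiag f) Laminv) = subdiag (\<lambda>i. c * f i)"
  by (auto intro!: ext simp: Laminv_eq_subdiag mmul_mdiag_left mscale_def subdiag_def)

lemma mpow_subdiag:
  "mpow (subdiag a) n = (\<lambda>i j. if i = j + int n then \<Prod>t<n. a (i - int t) else 0)"
proof (induction n)
  case (Suc n)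
  show ?case
    by (auto intro!: ext simp: Suc mmul_subdiag_right algebra_simps)
qed (auto intro!: ext simp: mid_def)

lemma suminf_at_offset:
  fixes f :: "nat \<Rightarrow> complex"
  shows "(\<Sum>n. if i = j + int n then f n else 0) = (if j \<le> i then f (nat (i - j)) else 0)"
proof (cases "j \<le> i")
  case True
  then have "(\<lambda>n. if i = j + int n then f n else 0) = (\<lambda>n. if n = nat (i - j) then f n else 0)"
    by (auto intro!: ext)
  with True show ?thesis
    using sums_single[of "nat (i - j)" f] by (simp add: sums_iff)
qed simp

lemma mseries_mpow_subdiag:
  "mseries (\<lambda>n. mpow (subdiag a) n)
     = (\<lambda>i j. if j \<le> i then \<Prod>t<nat (i - j). a (i - int t) else 0)"
  by (simp add: mseries_def mpow_subdiag suminf_at_offset)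

lemma banded_mseries_mpow_subdiag: "banded 0 (mseries (\<lambda>n. mpow (subdiag a) n))"
  unfolding banded_def mseries_mpow_subdiag by simp

lemma mseries_mpow_subdiag_right_inverse:
  "mmul (msub mid (subdiag a)) (mseries (\<lambda>n. mpow (subdiag a) n)) = mid"
proof -
  let ?S = "mseries (\<lambda>n. mpow (subdiag a) n)"
  have "mmul (msub mid (subdiag a)) ?S = msub ?S (mmul (subdiag a) ?S)"
    by (simp add: mmul_msub_left[OF banded_mseries_mpow_subdiag banded_mid banded_subdiag])
  also have "\<dots> = mid"
  proof (intro ext)
    fix i j
    show "msub ?S (mmul (subdiag a) ?S) i j = mid i j"
    proof (cases "j < i")
      case True
      define n where "n = nat (i - 1 - j)"
      with True have n: "nat (i - j) = Suc n" by simp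
      have "(\<Prod>t<Suc n. a (i - int t)) = a i * (\<Prod>t<n. a (i - 1 - int t))"
        by (subst prod.lessThan_Suc_shift) (simp add: algebra_simps)
      with True show ?thesis
        by (simp add: msub_def mid_def mmul_subdiag_left mseries_mpow_subdiag n n_def
                 del: prod.lessThan_Suc)
    qed (auto simp: msub_def mid_def mmul_subdiag_left mseries_mpow_subdiag)
  qed
  finally show ?thesis .
qed

lemma mseries_mpow_subdiag_left_inverse:
  "mmul (mseries (\<lambda>n. mpow (subdiag a) n)) (msub mid (subdiag a)) = mid"
proof -
  let ?S = "mseries (\<lambda>n. mpow (subdiag a) n)"
  have "mmul ?S (msub mid (subdiag a)) = msub ?S (mmul ?S (subdiag a))"
    by (simp add: mmul_msub_right[OF banded_mseries_mpow_subdiag banded_mid banded_subdiag])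
  also have "\<dots> = mid"
  proof (intro ext)
    fix i j
    show "msub ?S (mmul ?S (subdiag a)) i j = mid i j"
    proof (cases "j < i")
      case True
      define n where "n = nat (i - (j + 1))"
      with True have "nat (i - j) = Suc n" "i - int n = j + 1" by simp_all
      with True show ?thesis
        by (simp add: msub_def mid_def mmul_subdiag_right mseries_mpow_subdiag n_def)
    qed (auto simp: msub_def mid_def mmul_subdiag_right mseries_mpow_subdiag)
  qed
  finally show ?thesis .
qed

section \<open>Weighted lower triangular Toeplitz matrices\<close>

text \<open>ltoep w f = diag(w) f(\<Lambda>^-1) diag(w)^-1, meaningful only for a nowhere vanishing weight w.\<close>

definition ltoep :: "(int \<Rightarrow> complex) \<Rightarrow> complex fps \<Rightarrow> cmat" where
  "ltoep w f = (\<lambda>i j. if j \<le> i then w i * f $ nat (i - j) / w j else 0)"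

lemma banded_ltoep: "banded 0 (ltoep w f)"
  unfolding banded_def ltoep_def by auto

lemma ltoep_one: "(\<And>i. w i \<noteq> 0) \<Longrightarrow> ltoep w 1 = mid"
  unfolding ltoep_def mid_def by (intro ext) auto

lemma ltoep_mult:
  assumes w: "\<And>i. w i \<noteq> 0"
  shows "mmul (ltoep w f) (ltoep w g) = ltoep w (f * g)"
proof (intro ext)
  fix i j
  have sum: "mmul (ltoep w f) (ltoep w g) i j = (\<Sum>k=j..i. ltoep w f i k * ltoep w g k j)"
    by (rule mmul_banded_eq_sum[OF banded_ltoep banded_ltoep]) auto
  show "mmul (ltoep w f) (ltoep w g) i j = ltoep w (f * g) i j"
  proof (cases "j \<le> i")
    case True
    define n where "n = nat (i - j)"
    have "(\<Sum>k=j..i. ltoep w f i k * ltoep w g k j)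
        = (\<Sum>k=j..i. w i * (f $ nat (i - k) * g $ nat (k - j)) / w j)"
      by (intro sum.cong refl) (auto simp: ltoep_def w)
    also have "\<dots> = w i * (\<Sum>k=j..i. f $ nat (i - k) * g $ nat (k - j)) / w j"
      by (simp add: sum_distrib_left sum_divide_distrib)
    also have "(\<Sum>k=j..i. f $ nat (i - k) * g $ nat (k - j)) = (\<Sum>m=0..n. f $ m * g $ (n - m))"
    proof (rule sum.reindex_bij_witness[of _ "\<lambda>m. i - int m" "\<lambda>k. nat (i - k)"])
      fix k assume "k \<in> {j..i}"
      then have "n - nat (i - k) = nat (k - j)"
        unfolding n_def atLeastAtMost_iff by arith
      then show "f $ nat (i - k) * g $ (n - nat (i - k)) = f $ nat (i - k) * g $ nat (k - j)"
        by simp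
    qed (use True in \<open>auto simp: n_def\<close>)
    also have "\<dots> = (f * g) $ n"
      by (simp add: fps_mult_nth)
    finally show ?thesis
      using sum True by (simp add: ltoep_def n_def)
  qed (unfold sum, simp add: ltoep_def)
qed

lemma mdiag_conj_ltoep:
  "mmul (mmul (mdiag w) (ltoep (\<lambda>_. 1) f)) (mdiag (\<lambda>i. inverse (w i))) = ltoep w f"
  by (auto intro!: ext simp: mmul_mdiag_left mmul_mdiag_right ltoep_def field_simps)

lemma linv_unique:
  assumes "lower_tri A" "lower_tri B" "mmul A B = mid" "mmul B A = mid"
  shows "linv A = B"
  unfolding linv_def
proof (rule the_equality)
  fix B' assume B': "lower_tri B' \<and> mmul A B' = mid \<and> mmul B' A = mid"
  have "B' = mmul B' (mmul A B)"
    using assms by simp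
  also have "\<dots> = mmul (mmul B' A) B"
    using assms B' unfolding lower_tri_iff_banded by (intro mmul_assoc_banded[symmetric]) auto
  finally show "B' = B"
    using B' by simp
qed (use assms in simp)

lemma linv_ltoep:
  assumes "\<And>i. w i \<noteq> 0" "f $ 0 \<noteq> 0"
  shows "linv (ltoep w f) = ltoep w (inverse f)"
  by (rule linv_unique)
     (simp_all add: lower_tri_iff_banded banded_ltoep ltoep_mult ltoep_one assms
                    inverse_mult_eq_1 inverse_mult_eq_1')

section \<open>q-difference equations for formal power series\<close>

lemma fps_linear_mult_nth_Suc:
  fixes c :: complex
  shows "((1 + fps_const c * fps_X) * f) $ Suc m = f $ Suc m + c * f $ m"
proof -
  have "(1 + fps_const c * fps_X) * f = f + fps_const c * (fps_X * f)"
    by (simp add: algebra_simps)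
  then show ?thesis by simp
qed

lemma fps_geometric_mult:
  fixes x :: complex
  shows "(1 + fps_const (- x) * fps_X) * Abs_fps (\<lambda>n. x ^ n) = 1"
proof (rule fps_ext)
  fix n show "((1 + fps_const (- x) * fps_X) * Abs_fps (\<lambda>n. x ^ n)) $ n = 1 $ n"
    by (cases n) (simp_all add: fps_linear_mult_nth_Suc)
qed

lemma fps_geometric_compose_linear:
  fixes x q :: complex
  shows "Abs_fps (\<lambda>n. x ^ n) oo (fps_const q * fps_X) = Abs_fps (\<lambda>n. (q * x) ^ n)"
  by (simp add: fps_eq_iff power_mult_distrib)

lemma fps_linear_compose_linear:
  fixes c q :: complex
  shows "(1 + fps_const c * fps_X) oo (fps_const q * fps_X) = 1 + fps_const (q * c) * fps_X"
  by (simp add: fps_compose_add_distrib flip: fps_const_mult_apply_left fps_const_mult)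

lemma fps_prod_nth_0: "prod F A $ 0 = (\<Prod>k\<in>A. F k $ 0)"
  by (induction A rule: infinite_finite_induct) simp_all

lemma fps_compose_linear_mult:
  fixes q :: complex
  shows "(f * g) oo (fps_const q * fps_X) = (f oo (fps_const q * fps_X)) * (g oo (fps_const q * fps_X))"
  by (simp add: fps_compose_mult_distrib)

lemma geometric_prod_qdifference:
  fixes x q :: complex
  shows "(1 + fps_const (- x) * fps_X) * (\<Prod>k<N. Abs_fps (\<lambda>n. (q ^ k * x) ^ n))
       = (1 + fps_const (- (q ^ N * x)) * fps_X)
           * ((\<Prod>k<N. Abs_fps (\<lambda>n. (q ^ k * x) ^ n)) oo (fps_const q * fps_X))"
proof (induction N)
  case (Suc N)
  let ?P = "\<Prod>k<N. Abs_fps (\<lambda>n. (q ^ k * x) ^ n)" and ?g = "Abs_fps (\<lambda>n. (q ^ N * x) ^ n)"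
  let ?D = "\<lambda>f. f oo (fps_const q * fps_X)"
  have "?D ?g = Abs_fps (\<lambda>n. (q ^ Suc N * x) ^ n)"
    by (simp add: fps_geometric_compose_linear mult.assoc)
  then have geo: "(1 + fps_const (- (q ^ Suc N * x)) * fps_X) * ?D ?g = 1"
    by (simp only: fps_geometric_mult)
  have "(1 + fps_const (- x) * fps_X) * (?P * ?g)
      = ?D ?P * ((1 + fps_const (- (q ^ N * x)) * fps_X) * ?g)"
    by (simp only: Suc mult.assoc[symmetric]) (simp only: ac_simps)
  also have "\<dots> = ?D ?P * ((1 + fps_const (- (q ^ Suc N * x)) * fps_X) * ?D ?g)"
    by (simp only: fps_geometric_mult geo)
  also have "\<dots> = (1 + fps_const (- (q ^ Suc N * x)) * fps_X) * ?D (?P * ?g)"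
    by (simp only: fps_compose_linear_mult) (simp only: ac_simps)
  finally show ?case by simp
qed simp

lemma linear_prod_qdifference:
  fixes c q :: complex
  shows "(1 + fps_const (q ^ N * c) * fps_X) * (\<Prod>k<N. 1 + fps_const (q ^ k * c) * fps_X)
       = (1 + fps_const c * fps_X)
           * ((\<Prod>k<N. 1 + fps_const (q ^ k * c) * fps_X) oo (fps_const q * fps_X))"
proof (induction N)
  case (Suc N)
  let ?P = "\<Prod>k<N. 1 + fps_const (q ^ k * c) * fps_X" and ?h = "1 + fps_const (q ^ N * c) * fps_X"
  let ?D = "\<lambda>f. f oo (fps_const q * fps_X)"
  have "?D ?h = 1 + fps_const (q ^ Suc N * c) * fps_X"
    by (simp add: fps_linear_compose_linear mult.assoc)
  then have "(1 + fps_const (q ^ Suc N * c) * fps_X) * (?P * ?h) = ?D ?h * (?h * ?P)"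
    by (simp only: ac_simps)
  also have "\<dots> = (1 + fps_const c * fps_X) * ?D (?P * ?h)"
    by (simp only: Suc fps_compose_linear_mult mult.assoc[symmetric]) (simp only: ac_simps)
  finally show ?case by simp
qed simp

lemma fps_qdifference_limit:
  fixes G :: "nat \<Rightarrow> complex fps" and q :: complex
  assumes q: "cmod q < 1"
    and eq: "\<And>N. (1 + fps_const (a N) * fps_X) * G N
                    = (1 + fps_const (b N) * fps_X) * (G N oo (fps_const q * fps_X))"
    and G0: "\<And>N. G N $ 0 = 1"
    and a: "a \<longlonglongrightarrow> a0" and b: "b \<longlonglongrightarrow> b0"
  obtains g where "\<And>m. (\<lambda>N. G N $ m) \<longlonglongrightarrow> g $ m" "g $ 0 = 1"
    "(1 + fps_const a0 * fps_X) * g = (1 + fps_const b0 * fps_X) * (g oo (fps_const q * fps_X))"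
proof -
  have coeff: "G N $ Suc m + a N * G N $ m = q ^ Suc m * G N $ Suc m + b N * (q ^ m * G N $ m)" for N m
    using arg_cong[OF eq[of N], of "\<lambda>f. f $ Suc m"] by (simp add: fps_linear_mult_nth_Suc)
  have q_pow: "1 - q ^ Suc m \<noteq> 0" for m
  proof -
    have "cmod (q ^ Suc m) < 1"
      using q by (simp add: norm_power power_less_one_iff norm_ge_zero del: power_Suc)
    then show ?thesis by auto
  qed
  have rec: "G N $ Suc m = (b N * q ^ m - a N) * G N $ m / (1 - q ^ Suc m)" for N m
    using coeff[of N m] q_pow[of m] by (simp add: field_simps del: power_Suc)
  have conv: "convergent (\<lambda>N. G N $ m)" for m
  proof (induction m)
    case 0 then show ?case by (simp add: G0 convergent_const)
  next
    case (Suc m)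
    then obtain L where "(\<lambda>N. G N $ m) \<longlonglongrightarrow> L"
      by (auto simp: convergent_def)
    then have "(\<lambda>N. (b N * q ^ m - a N) * G N $ m / (1 - q ^ Suc m))
        \<longlonglongrightarrow> (b0 * q ^ m - a0) * L / (1 - q ^ Suc m)"
      by (intro tendsto_intros a b q_pow)
    then show ?case
      unfolding rec convergent_def by blast
  qed
  define g where "g = Abs_fps (\<lambda>m. lim (\<lambda>N. G N $ m))"
  have lim: "(\<lambda>N. G N $ m) \<longlonglongrightarrow> g $ m" for m
    using conv[of m] by (simp add: g_def convergent_LIMSEQ_iff)
  have "(1 + fps_const a0 * fps_X) * g = (1 + fps_const b0 * fps_X) * (g oo (fps_const q * fps_X))"
  proof (rule fps_ext)
    fix n
    show "((1 + fps_const a0 * fps_X) * g) $ n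
        = ((1 + fps_const b0 * fps_X) * (g oo (fps_const q * fps_X))) $ n"
    proof (cases n)
      case (Suc m)
      have "(\<lambda>N. G N $ Suc m + a N * G N $ m) \<longlonglongrightarrow> g $ Suc m + a0 * g $ m"
        by (intro tendsto_intros lim a)
      moreover have "(\<lambda>N. G N $ Suc m + a N * G N $ m)
          \<longlonglongrightarrow> q ^ Suc m * g $ Suc m + b0 * (q ^ m * g $ m)"
        unfolding coeff by (intro tendsto_intros lim b)
      ultimately have "g $ Suc m + a0 * g $ m = q ^ Suc m * g $ Suc m + b0 * (q ^ m * g $ m)"
        by (rule LIMSEQ_unique)
      with Suc show ?thesis by (simp add: fps_linear_mult_nth_Suc del: power_Suc)
    qed simp
  qed
  moreover have "g $ 0 = 1"
    using lim[of 0] by (simp add: G0 LIMSEQ_const_iff)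
  ultimately show ?thesis using lim that by blast
qed

section \<open>The vertex operators as Toeplitz matrices\<close>

lemma geom_inv_eq_ltoep: "geom_inv x = ltoep (\<lambda>_. 1) (Abs_fps (\<lambda>n. x ^ n))"
proof -
  have "mscale (x ^ n) (mpow Laminv n) = (\<lambda>i j. if i = j + int n then x ^ n else 0)" for n
    by (auto intro!: ext simp: Laminv_eq_subdiag mpow_subdiag mscale_def)
  then show ?thesis
    by (auto intro!: ext simp: geom_inv_def mseries_def suminf_at_offset ltoep_def)
qed

lemma mid_plus_Laminv_eq_ltoep:
  "madd mid (mscale c Laminv) = ltoep (\<lambda>_. 1) (1 + fps_const c * fps_X)"
proof (intro ext)
  fix i j
  show "madd mid (mscale c Laminv) i j = ltoep (\<lambda>_. 1) (1 + fps_const c * fps_X) i j"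
    by (cases "j \<le> i") (auto simp: madd_def mid_def mscale_def Laminv_def ltoep_def nat_eq_iff)
qed

lemma mprod_ltoep:
  assumes "\<And>k. F k = ltoep w (G k)" "\<And>i. w i \<noteq> 0"
  shows "mprod F N = ltoep w (\<Prod>k<N. G (Suc k))"
  by (induction N) (simp_all add: assms ltoep_mult ltoep_one)

lemma lim_ltoep:
  assumes "\<And>m. (\<lambda>N. P N $ m) \<longlonglongrightarrow> g $ m"
  shows "(\<lambda>i j. lim (\<lambda>N. ltoep w (P N) i j)) = ltoep w g"
proof (intro ext)
  fix i j
  have "(\<lambda>N. w i * P N $ nat (i - j) / w j) \<longlonglongrightarrow> w i * g $ nat (i - j) / w j"
    unfolding divide_inverse by (intro tendsto_mult_right tendsto_mult_left assms)
  then show "lim (\<lambda>N. ltoep w (P N) i j) = ltoep w g i j"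
    by (simp add: ltoep_def limI)
qed

context
  fixes s q :: complex
  assumes sq: "s ^ 2 = q" and q: "cmod q < 1"
begin

lemma odd_power_eq: "s ^ (2 * Suc k - 1) = q ^ k * s"
  using sq by (simp add: power_mult[symmetric] flip: sq)

lemma Gamma_minus_eq_ltoep:
  obtains g where "Gamma_minus s 1 = ltoep (\<lambda>_. 1) g" "g $ 0 = 1"
    "(1 + fps_const (- s) * fps_X) * g = g oo (fps_const q * fps_X)"
proof -
  define P where "P N = (\<Prod>k<N. Abs_fps (\<lambda>n. (q ^ k * s) ^ n))" for N
  have mprod: "mprod (\<lambda>k. geom_inv (1 * s ^ (2 * k - 1))) N = ltoep (\<lambda>_. 1) (P N)" for N
    unfolding P_def odd_power_eq[symmetric] by (rule mprod_ltoep) (simp_all add: geom_inv_eq_ltoep)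
  have eq: "(1 + fps_const (- s) * fps_X) * P N
      = (1 + fps_const (- (q ^ N * s)) * fps_X) * (P N oo (fps_const q * fps_X))" for N
    unfolding P_def by (rule geometric_prod_qdifference)
  have P0: "P N $ 0 = 1" for N
    by (simp add: P_def fps_prod_nth_0)
  have "(\<lambda>N. - (q ^ N * s)) \<longlonglongrightarrow> - (0 * s)"
    using q by (intro tendsto_intros LIMSEQ_power_zero)
  then obtain g where lim: "\<And>m. (\<lambda>N. P N $ m) \<longlonglongrightarrow> g $ m" and "g $ 0 = 1"
    and "(1 + fps_const (- s) * fps_X) * g
      = (1 + fps_const (- (0 * s)) * fps_X) * (g oo (fps_const q * fps_X))"
    using fps_qdifference_limit[where G = P, OF q eq P0 tendsto_const] by blast
  moreover have "Gamma_minus s 1 = ltoep (\<lambda>_. 1) g"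
    unfolding Gamma_minus_def mprod by (rule lim_ltoep[OF lim])
  ultimately show ?thesis
    using that by simp
qed

lemma Gamma_minus'_eq_ltoep:
  obtains g where "Gamma_minus' s Q = ltoep (\<lambda>_. 1) g" "g $ 0 = 1"
    "g = (1 + fps_const (Q * s) * fps_X) * (g oo (fps_const q * fps_X))"
proof -
  define P where "P N = (\<Prod>k<N. 1 + fps_const (q ^ k * (Q * s)) * fps_X)" for N
  have coeff: "Q * s ^ (2 * Suc k - 1) = q ^ k * (Q * s)" for k
    by (subst odd_power_eq) (simp add: ac_simps)
  have mprod: "mprod (\<lambda>k. madd mid (mscale (Q * s ^ (2 * k - 1)) Laminv)) N
      = ltoep (\<lambda>_. 1) (P N)" for N
    unfolding P_def coeff[symmetric]
    by (rule mprod_ltoep[where G = "\<lambda>k. 1 + fps_const (Q * s ^ (2 * k - 1)) * fps_X"])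
       (simp_all add: mid_plus_Laminv_eq_ltoep)
  have eq: "(1 + fps_const (q ^ N * (Q * s)) * fps_X) * P N
      = (1 + fps_const (Q * s) * fps_X) * (P N oo (fps_const q * fps_X))" for N
    unfolding P_def by (rule linear_prod_qdifference)
  have P0: "P N $ 0 = 1" for N
    by (simp add: P_def fps_prod_nth_0)
  have "(\<lambda>N. q ^ N * (Q * s)) \<longlonglongrightarrow> 0 * (Q * s)"
    using q by (intro tendsto_intros LIMSEQ_power_zero)
  then obtain g where lim: "\<And>m. (\<lambda>N. P N $ m) \<longlonglongrightarrow> g $ m" and "g $ 0 = 1"
    and "(1 + fps_const (0 * (Q * s)) * fps_X) * g
      = (1 + fps_const (Q * s) * fps_X) * (g oo (fps_const q * fps_X))"
    using fps_qdifference_limit[where G = P, OF q eq P0 _ tendsto_const] by blast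
  moreover have "Gamma_minus' s Q = ltoep (\<lambda>_. 1) g"
    unfolding Gamma_minus'_def mprod by (rule lim_ltoep[OF lim])
  ultimately show ?thesis
    using that by simp
qed

end

section \<open>Conjugation by the Gaussian weight\<close>

lemma qdifference_nth_Suc:
  fixes s q Q :: complex
  assumes "s ^ 2 = q"
    and "(1 + fps_const (- s) * fps_X) * f = (1 + fps_const (Q * s) * fps_X) * (f oo (fps_const q * fps_X))"
  shows "f $ Suc m - s * f $ m = s ^ (2 * m + 2) * f $ Suc m + Q * s ^ (2 * m + 1) * f $ m"
proof -
  have "f $ Suc m - s * f $ m = q ^ Suc m * f $ Suc m + Q * s * (q ^ m * f $ m)"
    using arg_cong[OF assms(2), of "\<lambda>g. g $ Suc m"]
    by (simp add: fps_linear_mult_nth_Suc del: power_Suc)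
  also have "\<dots> = s ^ (2 * m + 2) * f $ Suc m + Q * s ^ (2 * m + 1) * f $ m"
    by (simp add: power_mult power2_eq_square flip: assms(1))
  finally show ?thesis .
qed

lemma power_int_shift:
  fixes s :: complex
  assumes "s \<noteq> 0" "a = b + int k"
  shows "s powi a = s powi b * s ^ k"
  using assms by (simp add: power_int_add)

abbreviation gaussian_weight :: "complex \<Rightarrow> int \<Rightarrow> complex" where
  "gaussian_weight s i \<equiv> s ^ nat (i * i)"

lemma ltoep_gaussian_weight_nth:
  fixes s :: complex
  assumes "s \<noteq> 0" "j \<le> i"
  shows "ltoep (gaussian_weight s) f i j * s powi c = s powi (i * i - j * j + c) * f $ nat (i - j)"
proof -
  have "s ^ nat (k * k) = s powi (k * k)" for k
    by (simp add: power_int_def)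
  with assms show ?thesis
    by (simp add: ltoep_def power_int_add power_int_diff field_simps)
qed

lemma gaussian_weight_intertwining_entry:
  fixes s Q :: complex
  assumes s: "s \<noteq> 0" and f0: "f $ 0 = 1"
    and rec: "\<And>m. f $ Suc m - s * f $ m = s ^ (2 * m + 2) * f $ Suc m + Q * s ^ (2 * m + 1) * f $ m"
  defines "V \<equiv> ltoep (gaussian_weight s) f"
  shows "V (i + 1) j + Q * (V (i + 1) (j + 1) * s powi (2 * j))
       = V i (j - 1) - V i j * s powi (2 * j)"
proof (cases "j \<le> i")
  case True
  define m where "m = nat (i - j)"
  define e where "e = i * i - (j - 1) * (j - 1)"
  have i: "i = j + int m"
    using True by (simp add: m_def)
  have entry: "V a b * s powi c = s powi (a * a - b * b + c) * f $ nat (a - b)" if "b \<le> a" for a b c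
    unfolding V_def by (rule ltoep_gaussian_weight_nth[OF s that])
  have entry_shift: "V a b * s powi c = s powi e * s ^ k * f $ n"
    if "b \<le> a" "a * a - b * b + c = e + int k" "nat (a - b) = n" for a b c k n
    using entry[OF that(1)] power_int_shift[OF s that(2)] that(3) by simp
  have "V (i + 1) j * s powi 0 = s powi e * s ^ (2 * m + 2) * f $ Suc m"
    by (rule entry_shift) (simp_all add: i e_def algebra_simps)
  moreover have "V (i + 1) (j + 1) * s powi (2 * j) = s powi e * s ^ (2 * m + 1) * f $ m"
    by (rule entry_shift) (simp_all add: i e_def algebra_simps)
  moreover have "V i (j - 1) * s powi 0 = s powi e * s ^ 0 * f $ Suc m"
    by (rule entry_shift) (simp_all add: i e_def algebra_simps)
  moreover have "V i j * s powi (2 * j) = s powi e * s ^ 1 * f $ m"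
    by (rule entry_shift) (simp_all add: i e_def algebra_simps)
  ultimately have "V (i + 1) j + Q * (V (i + 1) (j + 1) * s powi (2 * j))
      = s powi e * (s ^ (2 * m + 2) * f $ Suc m + Q * s ^ (2 * m + 1) * f $ m)"
    and "V i (j - 1) - V i j * s powi (2 * j) = s powi e * (f $ Suc m - s * f $ m)"
    by (simp_all add: algebra_simps)
  then show ?thesis
    using rec[of m] by simp
next
  case False
  then show ?thesis
    by (cases "j = i + 1") (simp_all add: V_def ltoep_def f0 s)
qed

lemma gaussian_weight_intertwining:
  fixes s q Q :: complex
  assumes sq: "s ^ 2 = q" and s: "s \<noteq> 0" and f0: "f $ 0 = 1"
    and eq: "(1 + fps_const (- s) * fps_X) * f = (1 + fps_const (Q * s) * fps_X) * (f oo (fps_const q * fps_X))"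
  defines "V \<equiv> ltoep (gaussian_weight s) f"
  shows "mmul Lam (mmul V (msub mid (subdiag (\<lambda>i. - Q * q powi (i - 1)))))
       = mmul V (msub Lam (mdiag (\<lambda>i. q powi i)))"
proof -
  have q_powi: "q powi j = s powi (2 * j)" for j
    using sq by (simp add: power_int_mult)
  have "mmul V (msub mid (subdiag (\<lambda>i. - Q * q powi (i - 1))))
      = msub V (mmul V (subdiag (\<lambda>i. - Q * q powi (i - 1))))"
    unfolding V_def by (simp add: mmul_msub_right[OF banded_ltoep banded_mid banded_subdiag])
  moreover have "mmul V (msub Lam (mdiag (\<lambda>i. q powi i)))
      = msub (mmul V Lam) (mmul V (mdiag (\<lambda>i. q powi i)))"
    unfolding V_def
    by (rule mmul_msub_right[OF banded_ltoep banded_Lam banded_mono[OF banded_mdiag]]) simp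
  moreover have "V (i + 1) j + V (i + 1) (j + 1) * (Q * s powi (2 * j))
      = V i (j - 1) - V i j * s powi (2 * j)" for i j
    using gaussian_weight_intertwining_entry[OF s f0 qdifference_nth_Suc[OF sq eq], of i j]
    unfolding V_def by (simp add: mult.left_commute)
  ultimately show ?thesis
    by (auto intro!: ext simp: msub_def mmul_Lam_left mmul_Lam_right mmul_subdiag_right
                               mmul_mdiag_right q_powi)
qed

section \<open>The Lax operator\<close>

lemma banded_Lam_minus_mdiag: "banded 1 (msub Lam (mdiag f))"
  by (rule banded_msub[OF banded_Lam banded_mono[OF banded_mdiag]]) simp

lemma subdiag_intertwines_Lam_minus_mdiag:
  fixes q c :: complex
  shows "mmul (msub mid (subdiag (\<lambda>i. c * q powi i))) (msub Lam (mdiag (\<lambda>i. q powi i)))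
       = mmul (msub Lam (mdiag (\<lambda>i. q powi i))) (msub mid (subdiag (\<lambda>i. c * q powi (i - 1))))"
proof -
  let ?R = "msub Lam (mdiag (\<lambda>i. q powi i))"
  note R = banded_Lam_minus_mdiag[of "\<lambda>i. q powi i"]
  have "mmul (msub mid (subdiag (\<lambda>i. c * q powi i))) ?R
      = msub ?R (mmul (subdiag (\<lambda>i. c * q powi i)) ?R)"
    by (simp add: mmul_msub_left[OF R banded_mid banded_subdiag])
  moreover have "mmul ?R (msub mid (subdiag (\<lambda>i. c * q powi (i - 1))))
      = msub ?R (mmul ?R (subdiag (\<lambda>i. c * q powi (i - 1))))"
    by (simp add: mmul_msub_right[OF R banded_mid banded_subdiag])
  moreover have "c * q powi i * ?R (i - 1) j = ?R i (j + 1) * (c * q powi (j + 1 - 1))" for i j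
    by (cases "j = i") (auto simp: msub_def Lam_def mdiag_def)
  ultimately show ?thesis
    by (simp add: mmul_subdiag_left mmul_subdiag_right del: diff_add_cancel)
qed

lemma eq_mmul_mseries_mpow_subdiag:
  assumes "banded d L" "mmul L (msub mid (subdiag a)) = R"
  shows "L = mmul R (mseries (\<lambda>n. mpow (subdiag a) n))"
proof -
  have "L = mmul L (mmul (msub mid (subdiag a)) (mseries (\<lambda>n. mpow (subdiag a) n)))"
    by (simp add: mseries_mpow_subdiag_right_inverse)
  also have "\<dots> = mmul R (mseries (\<lambda>n. mpow (subdiag a) n))"
    by (simp add: mmul_assoc_banded[OF assms(1) banded_msub[OF banded_mid banded_subdiag]
                  banded_mseries_mpow_subdiag, symmetric] assms(2))
  finally show ?thesis .
qed

lemma mseries_mpow_subdiag_intertwines: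
  assumes R: "banded d R"
    and "mmul (msub mid (subdiag b)) R = mmul R (msub mid (subdiag a))"
  shows "mmul (mseries (\<lambda>n. mpow (subdiag b) n)) R = mmul R (mseries (\<lambda>n. mpow (subdiag a) n))"
proof -
  let ?Sa = "mseries (\<lambda>n. mpow (subdiag a) n)" and ?Sb = "mseries (\<lambda>n. mpow (subdiag b) n)"
  have P: "banded 0 (msub mid (subdiag c))" for c
    by (rule banded_msub[OF banded_mid banded_subdiag])
  have "mmul ?Sb R = mmul ?Sb (mmul (mmul R (msub mid (subdiag a))) ?Sa)"
    by (simp add: mmul_assoc_banded[OF R P banded_mseries_mpow_subdiag]
                  mseries_mpow_subdiag_right_inverse)
  also have "\<dots> = mmul (mmul ?Sb (msub mid (subdiag b))) (mmul R ?Sa)"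
    by (simp add: assms(2) [symmetric] mmul_assoc_banded[OF P R banded_mseries_mpow_subdiag]
                  mmul_assoc_banded[OF banded_mseries_mpow_subdiag P
                                       banded_mmul[OF R banded_mseries_mpow_subdiag]])
  also have "\<dots> = mmul R ?Sa"
    by (simp add: mseries_mpow_subdiag_left_inverse)
  finally show ?thesis .
qed

lemma dressed_Lam_mult_mid_minus_subdiag:
  fixes s q Q :: complex
  assumes sq: "s ^ 2 = q" and s: "s \<noteq> 0" and f0: "f $ 0 = 1"
    and eq: "(1 + fps_const (- s) * fps_X) * f = (1 + fps_const (Q * s) * fps_X) * (f oo (fps_const q * fps_X))"
  defines "w \<equiv> gaussian_weight s"
  shows "mmul (mmul (mmul (ltoep w (inverse f)) Lam) (ltoep w f))
            (msub mid (subdiag (\<lambda>i. - Q * q powi (i - 1))))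
       = msub Lam (mdiag (\<lambda>i. q powi i))"
    (is "mmul (mmul (mmul ?W Lam) ?V) ?P = ?R")
proof -
  have w: "w i \<noteq> 0" for i
    using s by (simp add: w_def)
  have P: "banded 0 ?P"
    by (rule banded_msub[OF banded_mid banded_subdiag])
  have "mmul (mmul (mmul ?W Lam) ?V) ?P = mmul (mmul ?W Lam) (mmul ?V ?P)"
    by (rule mmul_assoc_banded[OF banded_mmul[OF banded_ltoep banded_Lam] banded_ltoep P])
  also have "\<dots> = mmul ?W (mmul Lam (mmul ?V ?P))"
    by (rule mmul_assoc_banded[OF banded_ltoep banded_Lam banded_mmul[OF banded_ltoep P]])
  also have "\<dots> = mmul (mmul ?W ?V) ?R"
    unfolding w_def gaussian_weight_intertwining[OF sq s f0 eq]
    by (rule mmul_assoc_banded[OF banded_ltoep banded_ltoep banded_Lam_minus_mdiag, symmetric])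
  also have "mmul ?W ?V = mid"
    using f0 by (simp add: ltoep_mult w ltoep_one inverse_mult_eq_1)
  finally show ?thesis by simp
qed

context
  fixes s q Q :: complex
  assumes sq: "s ^ 2 = q" and q0: "q \<noteq> 0" and q: "cmod q < 1"
begin

lemma Wmat_eq_ltoep:
  obtains f where "Wmat s Q = ltoep (gaussian_weight s) (inverse f)" "f $ 0 = 1"
    "(1 + fps_const (- s) * fps_X) * f = (1 + fps_const (Q * s) * fps_X) * (f oo (fps_const q * fps_X))"
proof -
  let ?D = "\<lambda>f. f oo (fps_const q * fps_X)"
  obtain g where g: "Gamma_minus s 1 = ltoep (\<lambda>_. 1) g" "g $ 0 = 1"
    "(1 + fps_const (- s) * fps_X) * g = ?D g"
    using Gamma_minus_eq_ltoep[OF sq q] by blast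
  obtain h where h: "Gamma_minus' s Q = ltoep (\<lambda>_. 1) h" "h $ 0 = 1"
    "h = (1 + fps_const (Q * s) * fps_X) * ?D h"
    using Gamma_minus'_eq_ltoep[OF sq q] by blast
  have "(1 + fps_const (- s) * fps_X) * (g * h) = ?D g * h"
    by (simp only: mult.assoc[symmetric] g(3))
  also have "\<dots> = ?D g * ((1 + fps_const (Q * s) * fps_X) * ?D h)"
    by (rule arg_cong[OF h(3)])
  also have "\<dots> = (1 + fps_const (Q * s) * fps_X) * ?D (g * h)"
    by (simp only: fps_compose_linear_mult) (simp only: ac_simps)
  finally have eq: "(1 + fps_const (- s) * fps_X) * (g * h)
      = (1 + fps_const (Q * s) * fps_X) * ?D (g * h)" .
  have "Wmat s Q = mmul (mmul (mdiag (gaussian_weight s)) (ltoep (\<lambda>_. 1) (inverse h * inverse g)))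
                       (mdiag (\<lambda>i. inverse (gaussian_weight s i)))"
    unfolding Wmat_def qhalfsq_def qhalfsq_inv_def g(1) h(1)
    by (simp add: linv_ltoep g(2) h(2) ltoep_mult
                  mmul_assoc_banded[OF banded_mdiag banded_ltoep banded_ltoep])
  also have "\<dots> = ltoep (gaussian_weight s) (inverse (g * h))"
    by (simp add: mdiag_conj_ltoep fps_inverse_mult mult.commute)
  finally have "Wmat s Q = ltoep (gaussian_weight s) (inverse (g * h))" .
  with eq show ?thesis
    using that g(2) h(2) by simp
qed

lemma Lmat_eq_dressed_Lam:
  obtains f
  where "Lmat s Q = mmul (mmul (ltoep (gaussian_weight s) (inverse f)) Lam) (ltoep (gaussian_weight s) f)"
    "f $ 0 = 1"
    "(1 + fps_const (- s) * fps_X) * f = (1 + fps_const (Q * s) * fps_X) * (f oo (fps_const q * fps_X))"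
proof -
  obtain f where W: "Wmat s Q = ltoep (gaussian_weight s) (inverse f)" and f0: "f $ 0 = 1"
    and "(1 + fps_const (- s) * fps_X) * f = (1 + fps_const (Q * s) * fps_X) * (f oo (fps_const q * fps_X))"
    using Wmat_eq_ltoep by blast
  moreover have "s \<noteq> 0"
    using sq q0 by auto
  then have "linv (Wmat s Q) = ltoep (gaussian_weight s) f"
    using f0 by (simp add: W linv_ltoep fps_inverse_idempotent)
  ultimately show ?thesis
    using that by (simp add: Lmat_def)
qed

end

theorem mainTheorem6:
  fixes q s Q :: complex
  assumes "s ^ 2 = q" and "0 < cmod q" and "cmod q < 1"
    and "0 < cmod Q" and "cmod Q < 1"
  shows "Lmat s Q = mmul (msub Lam (mdiag (\<lambda>i. q powi i)))
            (mseries (\<lambda>n. mpow (mscale (- Q) (mmul (mdiag (\<lambda>i. q powi (i - 1))) Laminv)) n))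
       \<and> Lmat s Q = mmul
            (mseries (\<lambda>n. mpow (mscale (- Q) (mmul (mdiag (\<lambda>i. q powi i)) Laminv)) n))
            (msub Lam (mdiag (\<lambda>i. q powi i)))"
proof -
  let ?R = "msub Lam (mdiag (\<lambda>i. q powi i))"
  have q0: "q \<noteq> 0" and s0: "s \<noteq> 0"
    using assms(1,2) by auto
  obtain f
    where L: "Lmat s Q = mmul (mmul (ltoep (gaussian_weight s) (inverse f)) Lam) (ltoep (gaussian_weight s) f)"
    and f0: "f $ 0 = 1"
    and eq: "(1 + fps_const (- s) * fps_X) * f = (1 + fps_const (Q * s) * fps_X) * (f oo (fps_const q * fps_X))"
    using Lmat_eq_dressed_Lam[OF assms(1) q0 assms(3)] by blast
  have "banded 1 (Lmat s Q)"
    unfolding L using banded_mmul[OF banded_mmul[OF banded_ltoep banded_Lam] banded_ltoep] by simp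
  moreover have "mmul (Lmat s Q) (msub mid (subdiag (\<lambda>i. - Q * q powi (i - 1)))) = ?R"
    unfolding L by (rule dressed_Lam_mult_mid_minus_subdiag[OF assms(1) s0 f0 eq])
  ultimately have "Lmat s Q = mmul ?R (mseries (\<lambda>n. mpow (subdiag (\<lambda>i. - Q * q powi (i - 1))) n))"
    by (rule eq_mmul_mseries_mpow_subdiag)
  moreover have "mmul (mseries (\<lambda>n. mpow (subdiag (\<lambda>i. - Q * q powi i)) n)) ?R
      = mmul ?R (mseries (\<lambda>n. mpow (subdiag (\<lambda>i. - Q * q powi (i - 1))) n))"
    by (rule mseries_mpow_subdiag_intertwines[OF banded_Lam_minus_mdiag
                                                 subdiag_intertwines_Lam_minus_mdiag])
  ultimately show ?thesis
    by (simp add: mscale_mdiag_Laminv)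
qed

end
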